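(* Let $p,s\in\mathbb{N}$ be such that $p+1\leq s\leq 2^p$ and $s$ is a multiple of $4$. Then there is a UPB in $(\mathbb{C}^2)^{\otimes p}$ of cardinality $s$, with the possible exception of the case when $p\equiv 1\pmod 4$ and $s=2p+2$.
   Context: A product state in $(\mathbb{C}^2)^{\otimes p}$ is a vector $|v_1\rangle\otimes\cdots\otimes|v_p\rangle$ with each $|v_j\rangle\in\mathbb{C}^2$. A $p$-qubit unextendible product basis (UPB) is a finite set $\mathcal{S}\subseteq(\mathbb{C}^2)^{\otimes p}$ of unit product vectors that are pairwise orthogonal, such that no nonzero product vector outside $\mathcal{S}$ is orthogonal to every element of $\mathcal{S}$. *)

theory Defs
  imports Complex_Main
begin

text \<open>The p-qubit space (C^2)^{\<otimes>p} is modelled as functions from bit strings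
  (bool lists) to complex numbers that vanish off bit strings of length p;
  the coordinate at a bit string xs of length p is the coefficient of the
  computational basis vector |xs_0 ... xs_(p-1)>. A vector of C^2 is a function bool \<Rightarrow> complex.\<close>

definition qubit_strings :: "nat \<Rightarrow> bool list set" where
  "qubit_strings p = {xs. length xs = p}"

definition tensor_prod :: "nat \<Rightarrow> (nat \<Rightarrow> bool \<Rightarrow> complex) \<Rightarrow> (bool list \<Rightarrow> complex)" where
  "tensor_prod p v = (\<lambda>xs. if length xs = p then (\<Prod>j<p. v j (xs ! j)) else 0)"

definition is_product_vector :: "nat \<Rightarrow> (bool list \<Rightarrow> complex) \<Rightarrow> bool" where
  "is_product_vector p x \<longleftrightarrow> (\<exists>v. x = tensor_prod p v)"

definition qinner :: "nat \<Rightarrow> (bool list \<Rightarrow> complex) \<Rightarrow> (bool list \<Rightarrow> complex) \<Rightarrow> complex" where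
  "qinner p x y = (\<Sum>xs\<in>qubit_strings p. cnj (x xs) * y xs)"

definition is_UPB :: "nat \<Rightarrow> (bool list \<Rightarrow> complex) set \<Rightarrow> bool" where
  "is_UPB p S \<longleftrightarrow>
     finite S \<and>
     (\<forall>x\<in>S. is_product_vector p x \<and> qinner p x x = 1) \<and>
     (\<forall>x\<in>S. \<forall>y\<in>S. x \<noteq> y \<longrightarrow> qinner p x y = 0) \<and>
     \<not> (\<exists>z. is_product_vector p z \<and> z \<noteq> (\<lambda>_. 0) \<and> z \<notin> S \<and> (\<forall>x\<in>S. qinner p x z = 0))"

end

theory Submission
  imports Defs "HOL-Library.Countable" "HOL-Number_Theory.Cong"
begin

text \<open>A label (a, b) names the b-th vector of the a-th of countably many orthonormal bases of
  C^2, chosen so that no two labels give parallel vectors. A string of labels is a product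
  vector; strings carrying opposite labels in some coordinate are orthogonal; and a nonzero qubit
  is orthogonal to at most one label, so a product vector orthogonal to a whole family of strings
  would pick one label per coordinate that every string meets. Unextendibility thus becomes a
  purely combinatorial condition.

  For s \<le> 2p such families come from the round-robin schedule of s/2 players: strings are
  indexed by a player and a colour, every round contributes coordinates in which the two players
  of a match carry opposite labels, and counting the strings that can meet a fixed label in each
  coordinate (2n + 1 of them in total, against 2n + 2 strings) gives unextendibility. Larger sizes
  are reached by induction on p, splitting s = a + b with a and b admissible for p - 1 and
  prefixing the two vectors of a qubit basis; the one size that cannot be split, s = 20 for p = 6,
  is assembled from UPBs on 3 qubits.\<close>

definition qubit_inner :: "(bool \<Rightarrow> complex) \<Rightarrow> (bool \<Rightarrow> complex) \<Rightarrow> complex" where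
  "qubit_inner v w = (\<Sum>b\<in>UNIV. cnj (v b) * w b)"

lemma qubit_strings_Suc:
  "qubit_strings (Suc p) = (\<lambda>(b, xs). b # xs) ` (UNIV \<times> qubit_strings p)"
  by (auto simp: qubit_strings_def image_iff length_Suc_conv)

lemma tensor_prod_Cons:
  "length xs = p \<Longrightarrow> tensor_prod (Suc p) v (b # xs) = v 0 b * tensor_prod p (\<lambda>j. v (Suc j)) xs"
  by (simp add: tensor_prod_def prod.lessThan_Suc_shift del: prod.lessThan_Suc)

lemma qinner_tensor_prod:
  "qinner p (tensor_prod p v) (tensor_prod p w) = (\<Prod>j<p. qubit_inner (v j) (w j))"
proof (induction p arbitrary: v w)
  case 0
  then show ?case by (simp add: qinner_def qubit_strings_def tensor_prod_def)
next
  case (Suc p)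
  have "inj_on (\<lambda>(b, xs). b # xs) (UNIV \<times> qubit_strings p)"
    by (auto simp: inj_on_def)
  then have "qinner (Suc p) (tensor_prod (Suc p) v) (tensor_prod (Suc p) w)
      = (\<Sum>(b, xs)\<in>UNIV \<times> qubit_strings p. cnj (v 0 b) * w 0 b *
           (cnj (tensor_prod p (\<lambda>j. v (Suc j)) xs) * tensor_prod p (\<lambda>j. w (Suc j)) xs))"
    unfolding qinner_def qubit_strings_Suc
    by (simp add: sum.reindex case_prod_unfold)
      (intro sum.cong, auto simp: qubit_strings_def tensor_prod_Cons)
  also have "\<dots> = qubit_inner (v 0) (w 0) *
      qinner p (tensor_prod p (\<lambda>j. v (Suc j))) (tensor_prod p (\<lambda>j. w (Suc j)))"
    by (simp add: qinner_def qubit_inner_def sum_product sum.cartesian_product)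
  finally show ?case
    by (simp add: Suc.IH prod.lessThan_Suc_shift del: prod.lessThan_Suc)
qed

lemma tensor_prod_factor_nonzero:
  assumes "tensor_prod p w \<noteq> (\<lambda>_. 0)" and "j < p"
  shows "w j \<noteq> (\<lambda>_. 0)"
proof
  assume "w j = (\<lambda>_. 0)"
  then have "tensor_prod p w xs = 0" for xs
    using \<open>j < p\<close> by (auto simp: tensor_prod_def intro!: prod_zero bexI[of _ j])
  with assms(1) show False by auto
qed

lemma qubit_inner_zero_imp_det_zero:
  assumes "w \<noteq> (\<lambda>_. 0)" and "qubit_inner u w = 0" and "qubit_inner v w = 0"
  shows "cnj (u False) * cnj (v True) = cnj (u True) * cnj (v False)"
proof (rule ccontr)
  let ?det = "cnj (u False) * cnj (v True) - cnj (u True) * cnj (v False)"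
  assume "\<not> ?thesis"
  then have "?det \<noteq> 0" by simp
  have u: "cnj (u False) * w False + cnj (u True) * w True = 0"
    and v: "cnj (v False) * w False + cnj (v True) * w True = 0"
    using assms(2,3) by (simp_all add: qubit_inner_def UNIV_bool)
  have "?det * w False = cnj (v True) * (cnj (u False) * w False + cnj (u True) * w True)
      - cnj (u True) * (cnj (v False) * w False + cnj (v True) * w True)"
    by (simp add: algebra_simps)
  moreover have "?det * w True = cnj (u False) * (cnj (v False) * w False + cnj (v True) * w True)
      - cnj (v False) * (cnj (u False) * w False + cnj (u True) * w True)"
    by (simp add: algebra_simps)
  ultimately have "w False = 0" "w True = 0" using u v \<open>?det \<noteq> 0\<close> by simp_all
  then have "w = (\<lambda>_. 0)" by (auto intro!: ext) (metis (full_types))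
  with assms(1) show False ..
qed

type_synonym 'a label = "'a \<times> bool"

definition opposite :: "'a label \<Rightarrow> 'a label" where
  "opposite l = (fst l, \<not> snd l)"

lemma opposite_Pair [simp]: "opposite (a, b) = (a, \<not> b)"
  by (simp add: opposite_def)

lemma opposite_neq: "opposite l \<noteq> l"
  by (simp add: opposite_def prod_eq_iff)

text \<open>The basis k consists of the normalisations of (1, k) and (-k, 1), indexed by False and True.\<close>

definition qubit_ray :: "nat label \<Rightarrow> bool \<Rightarrow> real" where
  "qubit_ray l x = (if x = snd l then 1 else if x then real (fst l) else - real (fst l))"

definition qubit_state :: "'a::countable label \<Rightarrow> bool \<Rightarrow> complex" where
  "qubit_state l x = of_real (qubit_ray (to_nat (fst l), snd l) x / sqrt (1 + (real (to_nat (fst l)))\<^sup>2))"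

lemma qubit_ray_det_eq_imp_eq:
  assumes "qubit_ray l False * qubit_ray l' True = qubit_ray l True * qubit_ray l' False"
  shows "l = l'"
proof -
  obtain k b k' b' where "l = (k, b)" "l' = (k', b')" by fastforce
  moreover have "0 \<le> real k * real k'" by simp
  then have "1 + real k * real k' \<noteq> 0" by linarith
  ultimately show ?thesis using assms
    by (cases b; cases b') (auto simp: qubit_ray_def algebra_simps)
qed

lemma qubit_inner_qubit_state:
  "qubit_inner (qubit_state l) (qubit_state l') = of_real
     ((qubit_ray (to_nat (fst l), snd l) False * qubit_ray (to_nat (fst l'), snd l') False
       + qubit_ray (to_nat (fst l), snd l) True * qubit_ray (to_nat (fst l'), snd l') True)
      / (sqrt (1 + (real (to_nat (fst l)))\<^sup>2) * sqrt (1 + (real (to_nat (fst l')))\<^sup>2)))"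
  by (simp add: qubit_inner_def qubit_state_def UNIV_bool add_divide_distrib)

lemma qubit_ray_norm:
  "qubit_ray l False * qubit_ray l False + qubit_ray l True * qubit_ray l True = 1 + (real (fst l))\<^sup>2"
  by (cases l) (auto simp: qubit_ray_def power2_eq_square)

lemma qubit_inner_qubit_state_self: "qubit_inner (qubit_state l) (qubit_state l) = 1"
proof -
  have "0 < 1 + (real (to_nat (fst l)))\<^sup>2" by (simp add: add_pos_nonneg)
  then show ?thesis unfolding qubit_inner_qubit_state qubit_ray_norm by simp
qed

lemma qubit_inner_qubit_state_opposite: "qubit_inner (qubit_state l) (qubit_state (opposite l)) = 0"
  by (cases l) (simp add: qubit_inner_qubit_state qubit_ray_def opposite_def)

lemma qubit_state_orthogonal_unique:
  assumes "w \<noteq> (\<lambda>_. 0)"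
    and "qubit_inner (qubit_state l) w = 0" and "qubit_inner (qubit_state l') w = 0"
  shows "l = l'"
proof -
  let ?r = "\<lambda>l. sqrt (1 + (real (to_nat (fst l)))\<^sup>2)"
  have "?r l > 0" "?r l' > 0" by (simp_all add: add_pos_nonneg)
  with qubit_inner_zero_imp_det_zero[OF assms]
  have "qubit_ray (to_nat (fst l), snd l) False * qubit_ray (to_nat (fst l'), snd l') True
      = qubit_ray (to_nat (fst l), snd l) True * qubit_ray (to_nat (fst l'), snd l') False"
    by (simp add: qubit_state_def field_simps flip: of_real_mult)
  then have "(to_nat (fst l), snd l) = (to_nat (fst l'), snd l')"
    by (rule qubit_ray_det_eq_imp_eq)
  then show ?thesis by (simp add: prod_eq_iff)
qed

definition label_UPB :: "nat \<Rightarrow> 'a label list set \<Rightarrow> bool" where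
  "label_UPB p V \<longleftrightarrow> finite V \<and> (\<forall>v\<in>V. length v = p) \<and>
     pairwise (\<lambda>u v. \<exists>j<p. u ! j = opposite (v ! j)) V \<and>
     (\<forall>L. \<exists>v\<in>V. \<forall>j<p. v ! j \<noteq> L j)"

definition label_state :: "nat \<Rightarrow> 'a::countable label list \<Rightarrow> bool list \<Rightarrow> complex" where
  "label_state p v = tensor_prod p (\<lambda>j. qubit_state (v ! j))"

lemma qinner_label_state:
  "qinner p (label_state p u) (label_state p v) =
     (\<Prod>j<p. qubit_inner (qubit_state (u ! j)) (qubit_state (v ! j)))"
  unfolding label_state_def by (rule qinner_tensor_prod)

lemma qinner_label_state_self: "qinner p (label_state p v) (label_state p v) = 1"
  by (simp add: qinner_label_state qubit_inner_qubit_state_self)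

lemma qinner_label_state_opposite:
  assumes "j < p" and "u ! j = opposite (v ! j)"
  shows "qinner p (label_state p v) (label_state p u) = 0"
  using assms by (auto simp: qinner_label_state qubit_inner_qubit_state_opposite intro!: prod_zero bexI[of _ j])

lemma label_UPB_unextendible:
  fixes V :: "'a::countable label list set"
  assumes "label_UPB p V" and "tensor_prod p w \<noteq> (\<lambda>_. 0)"
  shows "\<exists>v\<in>V. qinner p (label_state p v) (tensor_prod p w) \<noteq> 0"
proof -
  define L :: "nat \<Rightarrow> 'a label" where "L j = (SOME l. qubit_inner (qubit_state l) (w j) = 0)" for j
  obtain v where "v \<in> V" and avoids: "\<forall>j<p. v ! j \<noteq> L j"
    using assms(1) unfolding label_UPB_def by blast
  have "qinner p (label_state p v) (tensor_prod p w) \<noteq> 0"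
  proof
    assume "qinner p (label_state p v) (tensor_prod p w) = 0"
    then obtain j where "j < p" and orth: "qubit_inner (qubit_state (v ! j)) (w j) = 0"
      by (auto simp: label_state_def qinner_tensor_prod)
    have "qubit_inner (qubit_state (L j)) (w j) = 0"
      unfolding L_def using orth by (rule someI)
    with orth have "v ! j = L j"
      using qubit_state_orthogonal_unique tensor_prod_factor_nonzero[OF assms(2) \<open>j < p\<close>] by blast
    with avoids \<open>j < p\<close> show False by blast
  qed
  with \<open>v \<in> V\<close> show ?thesis ..
qed

lemma is_UPB_label_state:
  fixes V :: "'a::countable label list set"
  assumes "label_UPB p V"
  shows "is_UPB p (label_state p ` V)" and "card (label_state p ` V) = card V"
proof -
  have orth: "qinner p (label_state p u) (label_state p v) = 0"
    if "u \<in> V" "v \<in> V" "u \<noteq> v" for u v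
    using assms that by (force simp: label_UPB_def pairwise_def intro: qinner_label_state_opposite)
  have "inj_on (label_state p) V"
    by (rule inj_onI) (metis orth qinner_label_state_self zero_neq_one)
  then show "card (label_state p ` V) = card V" by (rule card_image)
  show "is_UPB p (label_state p ` V)"
    using assms orth label_UPB_unextendible[OF assms]
    by (auto simp: is_UPB_def label_UPB_def is_product_vector_def qinner_label_state_self)
      (auto simp: label_state_def)
qed

lemma label_UPB_concat:
  assumes S: "label_UPB q S" and T: "\<forall>x\<in>S. label_UPB r (T x)"
  shows "label_UPB (q + r) (\<Union>x\<in>S. (@) x ` T x)"
  unfolding label_UPB_def
proof (intro conjI allI)
  have len_S: "\<forall>x\<in>S. length x = q" using S by (simp add: label_UPB_def)
  have nth_concat: "(x @ y) ! j = (if j < q then x ! j else y ! (j - q))" if "x \<in> S" for x y :: "'a label list" and j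
    using len_S that by (simp add: nth_append)
  show "finite (\<Union>x\<in>S. (@) x ` T x)" "\<forall>v\<in>\<Union>x\<in>S. (@) x ` T x. length v = q + r"
    using S T by (auto simp: label_UPB_def)
  show "pairwise (\<lambda>u v. \<exists>j<q + r. u ! j = opposite (v ! j)) (\<Union>x\<in>S. (@) x ` T x)"
  proof (rule pairwiseI)
    fix u v assume "u \<in> (\<Union>x\<in>S. (@) x ` T x)" "v \<in> (\<Union>x\<in>S. (@) x ` T x)" "u \<noteq> v"
    then obtain x y x' y' where "x \<in> S" "x' \<in> S" "y \<in> T x" "y' \<in> T x'"
      and uv: "u = x @ y" "v = x' @ y'" "x @ y \<noteq> x' @ y'"
      by blast
    show "\<exists>j<q + r. u ! j = opposite (v ! j)"
    proof (cases "x = x'")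
      case True
      have "pairwise (\<lambda>u v. \<exists>j<r. u ! j = opposite (v ! j)) (T x)"
        using T \<open>x \<in> S\<close> by (simp add: label_UPB_def)
      then obtain j where "j < r" "y ! j = opposite (y' ! j)"
        using True \<open>y \<in> T x\<close> \<open>y' \<in> T x'\<close> \<open>x @ y \<noteq> x' @ y'\<close> by (auto dest: pairwiseD)
      with True show ?thesis
        using uv(1,2) nth_concat \<open>x \<in> S\<close> by (intro exI[of _ "q + j"]) simp
    next
      case False
      with S \<open>x \<in> S\<close> \<open>x' \<in> S\<close> obtain j where "j < q" "x ! j = opposite (x' ! j)"
        by (auto simp: label_UPB_def dest: pairwiseD)
      then show ?thesis
        using uv(1,2) nth_concat \<open>x \<in> S\<close> \<open>x' \<in> S\<close> by (intro exI[of _ j]) simp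
    qed
  qed
  fix L :: "nat \<Rightarrow> 'a label"
  have "\<forall>x\<in>S. \<exists>y\<in>T x. \<forall>j<r. y ! j \<noteq> L (q + j)"
    using T by (auto simp: label_UPB_def)
  then obtain y where y: "\<forall>x\<in>S. y x \<in> T x \<and> (\<forall>j<r. y x ! j \<noteq> L (q + j))"
    by metis
  obtain x where "x \<in> S" and x: "\<forall>j<q. x ! j \<noteq> L j"
    using S unfolding label_UPB_def by blast
  have "\<forall>j<q + r. (x @ y x) ! j \<noteq> L j"
  proof (intro allI impI)
    fix j assume "j < q + r"
    show "(x @ y x) ! j \<noteq> L j"
    proof (cases "j < q")
      case False
      then have "j = q + (j - q)" "j - q < r" using \<open>j < q + r\<close> by simp_all
      then show ?thesis using y \<open>x \<in> S\<close> nth_concat[OF \<open>x \<in> S\<close>] False by metis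
    qed (use x nth_concat[OF \<open>x \<in> S\<close>] in simp)
  qed
  then show "\<exists>v\<in>\<Union>x\<in>S. (@) x ` T x. \<forall>j<q + r. v ! j \<noteq> L j"
    using y \<open>x \<in> S\<close> by blast
qed

lemma card_UN_append:
  assumes "finite S" and "\<forall>x\<in>S. length x = q" and "\<forall>x\<in>S. finite (T x)"
  shows "card (\<Union>x\<in>S. (@) x ` T x) = (\<Sum>x\<in>S. card (T x))"
proof -
  have "card (\<Union>x\<in>S. (@) x ` T x) = (\<Sum>x\<in>S. card ((@) x ` T x))"
    using assms by (intro card_UN_disjoint) (auto simp: append_eq_append_conv)
  also have "\<dots> = (\<Sum>x\<in>S. card (T x))"
    by (intro sum.cong refl card_image) (simp add: inj_on_def)
  finally show ?thesis .
qed

definition has_label_UPB :: "nat \<Rightarrow> nat \<Rightarrow> bool" where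
  "has_label_UPB p s \<longleftrightarrow> (\<exists>V :: (nat \<times> bool) label list set. label_UPB p V \<and> card V = s)"

lemma has_label_UPB_sum:
  assumes "has_label_UPB q m" and "\<forall>i<m. has_label_UPB r (f i)"
  shows "has_label_UPB (q + r) (\<Sum>i<m. f i)"
proof -
  obtain S :: "(nat \<times> bool) label list set" where S: "label_UPB q S" "card S = m"
    using assms(1) unfolding has_label_UPB_def by blast
  then obtain e where e: "bij_betw e {..<m} S"
    using ex_bij_betw_nat_finite[of S] by (auto simp: label_UPB_def atLeast0LessThan)
  have "\<forall>i<m. \<exists>V :: (nat \<times> bool) label list set. label_UPB r V \<and> card V = f i"
    using assms(2) by (simp add: has_label_UPB_def)
  then obtain W :: "nat \<Rightarrow> (nat \<times> bool) label list set"
    where W: "\<forall>i<m. label_UPB r (W i) \<and> card (W i) = f i"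
    by metis
  define T where "T x = W (inv_into {..<m} e x)" for x
  have T_e: "T (e i) = W i" if "i < m" for i
    using e that by (simp add: T_def bij_betw_def)
  have T: "\<forall>x\<in>S. label_UPB r (T x)"
    using e W T_e by (auto simp: bij_betw_def)
  have "card (\<Union>x\<in>S. (@) x ` T x) = (\<Sum>x\<in>S. card (T x))"
    using S T by (intro card_UN_append) (auto simp: label_UPB_def)
  also have "\<dots> = (\<Sum>i<m. card (T (e i)))"
    using e by (rule sum.reindex_bij_betw[symmetric])
  also have "\<dots> = (\<Sum>i<m. f i)"
    using W T_e by simp
  finally show ?thesis
    using label_UPB_concat[OF S(1) T] by (auto simp: has_label_UPB_def)
qed

lemma has_label_UPB_qubit_basis: "has_label_UPB 1 2"
proof -
  define V :: "(nat \<times> bool) label list set" where "V = {[((0, False), False)], [((0, False), True)]}"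
  have "label_UPB 1 V"
    unfolding label_UPB_def
  proof (intro conjI allI)
    fix L :: "nat \<Rightarrow> (nat \<times> bool) label"
    show "\<exists>v\<in>V. \<forall>j<1. v ! j \<noteq> L j"
      by (cases "L 0 = ((0, False), False)") (auto simp: V_def)
  qed (auto simp: V_def pairwise_def opposite_def)
  moreover have "card V = 2" by (simp add: V_def)
  ultimately show ?thesis by (auto simp: has_label_UPB_def)
qed

lemma has_label_UPB_Suc_add:
  assumes "has_label_UPB p a" and "has_label_UPB p b"
  shows "has_label_UPB (Suc p) (a + b)"
  using has_label_UPB_sum[OF has_label_UPB_qubit_basis, of p "\<lambda>i. if i = 0 then a else b"] assms
  by (simp add: numeral_2_eq_2)

lemma label_UPB_tabulate:
  fixes f :: "'d \<Rightarrow> nat \<Rightarrow> 'a label" and c :: "nat \<Rightarrow> nat"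
  assumes "finite D"
    and orth: "pairwise (\<lambda>d d'. \<exists>j<p. f d j = opposite (f d' j)) D"
    and fibres: "\<forall>j<p. \<forall>l. card {d\<in>D. f d j = l} \<le> c j"
    and few: "(\<Sum>j<p. c j) < card D"
  shows "label_UPB p ((\<lambda>d. map (f d) [0..<p]) ` D)"
    and "card ((\<lambda>d. map (f d) [0..<p]) ` D) = card D"
proof -
  have "inj_on (\<lambda>d. map (f d) [0..<p]) D"
    using orth unfolding inj_on_def pairwise_def by (metis opposite_neq map_eq_conv atLeastLessThan_iff set_upt zero_le)
  then show "card ((\<lambda>d. map (f d) [0..<p]) ` D) = card D" by (rule card_image)
  have "\<exists>d\<in>D. \<forall>j<p. f d j \<noteq> L j" for L
  proof (rule ccontr)
    assume "\<not> ?thesis"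
    then have "D \<subseteq> (\<Union>j<p. {d\<in>D. f d j = L j})" by blast
    then have "card D \<le> card (\<Union>j<p. {d\<in>D. f d j = L j})"
      using \<open>finite D\<close> by (intro card_mono) auto
    also have "\<dots> \<le> (\<Sum>j<p. card {d\<in>D. f d j = L j})"
      by (rule card_UN_le) simp
    also have "\<dots> \<le> (\<Sum>j<p. c j)"
      by (intro sum_mono) (simp add: fibres[rule_format])
    finally show False using few by simp
  qed
  moreover have "pairwise (\<lambda>u v. \<exists>j<p. u ! j = opposite (v ! j)) ((\<lambda>d. map (f d) [0..<p]) ` D)"
  proof (rule pairwise_imageI)
    fix x y assume "x \<in> D" "y \<in> D" "x \<noteq> y"
    then obtain j where "j < p" "f x j = opposite (f y j)"
      using orth unfolding pairwise_def by blast
    then show "\<exists>j<p. map (f x) [0..<p] ! j = opposite (map (f y) [0..<p] ! j)"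
      by auto
  qed
  ultimately show "label_UPB p ((\<lambda>d. map (f d) [0..<p]) ` D)"
    using assms(1) by (auto simp: label_UPB_def)
qed

text \<open>The round-robin 1-factorisation of the complete graph on {0..n}, n odd: in round r < n,
  vertex n is matched with r and every other i with the j such that i + j = 2r (mod n).\<close>

definition round_robin :: "nat \<Rightarrow> nat \<Rightarrow> nat \<Rightarrow> nat" where
  "round_robin n r i = (if i = n then r else if i = r then n else (2 * r + n - i) mod n)"

lemma round_robin_cong:
  assumes "r < n" and "i < n" and "i \<noteq> r"
  shows "round_robin n r i < n" and "[i + round_robin n r i = 2 * r] (mod n)"
proof -
  show "round_robin n r i < n"
    using assms by (simp add: round_robin_def)
  have "[i + (2 * r + n - i) mod n = i + (2 * r + n - i)] (mod n)"
    by (intro cong_add cong_refl) (simp add: cong_def)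
  also have "i + (2 * r + n - i) = 2 * r + n * 1"
    using assms by simp
  also have "[2 * r + n * 1 = 2 * r] (mod n)"
    by (rule cong_add_lcancel_0_nat[THEN iffD2]) (simp add: cong_def)
  finally show "[i + round_robin n r i = 2 * r] (mod n)"
    using assms by (simp add: round_robin_def)
qed

lemma round_robin_matching:
  assumes "odd n" and "r < n" and "i \<le> n"
  shows "round_robin n r i \<le> n" and "round_robin n r (round_robin n r i) = i"
    and "round_robin n r i \<noteq> i"
proof -
  have eq_if_cong: "a = b" if "a < n" "b < n" "[a = b] (mod n)" for a b
    using that by (simp add: cong_less_imp_eq_nat)
  consider "i = n" | "i = r" | "i < n" "i \<noteq> r" using assms(3) by linarith
  then have "round_robin n r i \<le> n \<and> round_robin n r (round_robin n r i) = i \<and> round_robin n r i \<noteq> i"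
  proof cases
    case 3
    define j where "j = round_robin n r i"
    have j: "j < n" "[i + j = 2 * r] (mod n)"
      using round_robin_cong[OF assms(2) 3] by (simp_all add: j_def)
    have "j \<noteq> r"
    proof
      assume "j = r"
      with j(2) have "[i + r = r + r] (mod n)" by (simp add: mult_2)
      then have "i = r" using 3 assms(2) by (intro eq_if_cong) (simp_all add: cong_add_rcancel_nat)
      with 3 show False by simp
    qed
    have "j \<noteq> i"
    proof
      assume "j = i"
      with j(2) have "[2 * i = 2 * r] (mod n)" by (simp add: mult_2)
      moreover have "coprime 2 n" using assms(1) by simp
      ultimately have "i = r" using 3 assms(2) by (intro eq_if_cong) (simp_all add: cong_mult_lcancel_nat)
      with 3 show False by simp
    qed
    have "[j + round_robin n r j = j + i] (mod n)"
      using round_robin_cong(2)[OF assms(2) j(1) \<open>j \<noteq> r\<close>] j(2)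
      by (metis add.commute cong_sym cong_trans)
    then have "round_robin n r j = i"
      using round_robin_cong(1)[OF assms(2) j(1) \<open>j \<noteq> r\<close>] 3
      by (intro eq_if_cong) (simp_all add: cong_add_lcancel_nat)
    with j \<open>j \<noteq> i\<close> show ?thesis by (simp add: j_def)
  qed (use assms(2) in \<open>auto simp: round_robin_def\<close>)
  then show "round_robin n r i \<le> n" "round_robin n r (round_robin n r i) = i" "round_robin n r i \<noteq> i"
    by simp_all
qed

lemma round_robin_covers:
  assumes "odd n" and "i \<le> n" and "i' \<le> n" and "i \<noteq> i'"
  obtains r where "r < n" and "round_robin n r i = i'"
proof -
  consider "i = n" | "i' = n" | "i < n" "i' < n" using assms by linarith
  then show thesis
  proof cases
    case 1 then show thesis using assms by (intro that[of i']) (auto simp: round_robin_def)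
  next
    case 2 then show thesis using assms by (intro that[of i]) (auto simp: round_robin_def)
  next
    case 3
    have "n > 0" using 3 by simp
    define r where "r = (i + i') * ((n + 1) div 2) mod n"
    have "r < n" using \<open>n > 0\<close> by (simp add: r_def)
    have "[2 * r = 2 * ((i + i') * ((n + 1) div 2))] (mod n)"
      by (simp add: r_def cong_def mod_mult_right_eq)
    also have "2 * ((i + i') * ((n + 1) div 2)) = (i + i') * (2 * ((n + 1) div 2))"
      by (simp add: ac_simps)
    also have "2 * ((n + 1) div 2) = n + 1"
      using assms(1) by presburger
    also have "(i + i') * (n + 1) = (i + i') + n * (i + i')"
      by (simp add: algebra_simps)
    also have "[(i + i') + n * (i + i') = i + i'] (mod n)"
      by (simp add: cong_def)
    finally have half: "[i + i' = 2 * r] (mod n)" by (rule cong_sym)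
    have "i \<noteq> r"
    proof
      assume "i = r"
      with half have "[i + i' = i + i] (mod n)" by (simp add: mult_2)
      then have "i' = i" using 3 by (simp add: cong_add_lcancel_nat cong_less_imp_eq_nat)
      with assms(4) show False by simp
    qed
    have "[i + round_robin n r i = i + i'] (mod n)"
      using round_robin_cong(2)[OF \<open>r < n\<close> 3(1) \<open>i \<noteq> r\<close>] half by (metis cong_sym cong_trans)
    then have "round_robin n r i = i'"
      using round_robin_cong(1)[OF \<open>r < n\<close> 3(1) \<open>i \<noteq> r\<close>] 3
      by (simp add: cong_add_lcancel_nat cong_less_imp_eq_nat)
    with \<open>r < n\<close> show thesis by (rule that)
  qed
qed

definition edge_label :: "nat \<Rightarrow> nat \<Rightarrow> nat \<Rightarrow> nat label" where
  "edge_label n r i = (min i (round_robin n r i), i < round_robin n r i)"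

lemma edge_label_round_robin:
  assumes "odd n" and "r < n" and "i \<le> n"
  shows "edge_label n r (round_robin n r i) = opposite (edge_label n r i)"
proof -
  have "round_robin n r (round_robin n r i) = i" "round_robin n r i \<noteq> i"
    using round_robin_matching(2,3)[OF assms] by simp_all
  then show ?thesis by (auto simp: edge_label_def min_def)
qed

lemma inj_on_edge_label:
  assumes "odd n" and "r < n"
  shows "inj_on (edge_label n r) {..n}"
proof (rule inj_onI)
  fix i i' assume "i \<in> {..n}" "i' \<in> {..n}" and eq: "edge_label n r i = edge_label n r i'"
  let ?j = "round_robin n r i" and ?j' = "round_robin n r i'"
  have j: "round_robin n r ?j = i" and j': "round_robin n r ?j' = i'"
    using round_robin_matching(2)[OF assms] \<open>i \<in> {..n}\<close> \<open>i' \<in> {..n}\<close> by simp_all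
  have min: "min i ?j = min i' ?j'" and less: "(i < ?j) = (i' < ?j')"
    using eq unfolding edge_label_def by simp_all
  show "i = i'"
  proof (cases "i < ?j")
    case True
    with less have "i' < ?j'" by blast
    with True min show ?thesis by linarith
  next
    case False
    with less have "\<not> i' < ?j'" by blast
    with False min have "?j = ?j'" by linarith
    then show ?thesis using j j' by metis
  qed
qed

definition mark :: "bool \<Rightarrow> 'a label \<Rightarrow> ('a \<times> bool) label" where
  "mark c l = ((fst l, c), snd l)"

lemma mark_eq_iff [simp]: "mark c l = mark c' l' \<longleftrightarrow> c = c' \<and> l = l'"
  by (auto simp: mark_def prod_eq_iff)

lemma opposite_mark: "opposite (mark c l) = mark c (opposite l)"
  by (simp add: mark_def opposite_def)

text \<open>Coordinate j of the string of the coloured vertex d = (i, e), for 1 + q + 2(n - q) coordinates: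
  coordinate 0 separates the two colours of i; each of the rounds r < q contributes one coordinate
  carrying the edge label of i, which the two colours share; each later round contributes two
  coordinates, in which the edge label is refined by the colour (for partners of equal colour) or
  by its agreement with the orientation of the edge (for partners of different colours).\<close>

definition family_label :: "nat \<Rightarrow> nat \<Rightarrow> nat \<times> bool \<Rightarrow> nat \<Rightarrow> (nat \<times> bool) label" where
  "family_label n q d j =
     (if j = 0 then mark False d
      else if j \<le> q then mark False (edge_label n (j - 1) (fst d))
      else let l = edge_label n (q + (j - q - 1) div 2) (fst d)
           in mark (if odd (j - q) then snd d else snd d = snd l) l)"

lemma family_label_0: "family_label n q d 0 = mark False d"
  by (simp add: family_label_def)

lemma family_label_early:
  "r < q \<Longrightarrow> family_label n q d (Suc r) = mark False (edge_label n r (fst d))"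
  by (simp add: family_label_def)

lemma family_label_late_fst:
  "family_label n q d (Suc (q + 2 * k)) = mark (snd d) (edge_label n (q + k) (fst d))"
  by (simp add: family_label_def)

lemma family_label_late_snd:
  "family_label n q d (Suc (Suc (q + 2 * k))) =
     mark (snd d = snd (edge_label n (q + k) (fst d))) (edge_label n (q + k) (fst d))"
proof -
  have "Suc (Suc (q + 2 * k)) - q - 1 = 2 * k + 1" by simp
  then show ?thesis by (simp add: family_label_def Let_def)
qed

lemma family_label_orthogonal:
  assumes "odd n" and "q \<le> n" and "d \<in> {..n} \<times> UNIV" and "d' \<in> {..n} \<times> UNIV" and "d \<noteq> d'"
  shows "\<exists>j<1 + q + 2 * (n - q). family_label n q d j = opposite (family_label n q d' j)"
proof -
  obtain i e i' e' where d: "d = (i, e)" "d' = (i', e')" "i \<le> n" "i' \<le> n"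
    using assms(3,4) by auto
  show ?thesis
  proof (cases "i = i'")
    case True
    then show ?thesis
      using d assms(5) by (intro exI[of _ 0]) (simp add: family_label_0 opposite_mark)
  next
    case False
    then obtain r where "r < n" and partner: "round_robin n r i = i'"
      by (rule round_robin_covers[OF assms(1) d(3,4)])
    obtain a s where as: "edge_label n r i = (a, s)" by fastforce
    then have as': "edge_label n r i' = (a, \<not> s)"
      using edge_label_round_robin[OF assms(1) \<open>r < n\<close> d(3)] partner by (simp add: opposite_def)
    show ?thesis
    proof (cases "r < q")
      case True
      then show ?thesis using d as as'
        by (intro exI[of _ "Suc r"]) (simp add: family_label_early opposite_mark)
    next
      case False
      define k where "k = r - q"
      have k: "r = q + k" "k < n - q"
        using False \<open>r < n\<close> by (simp_all add: k_def)
      show ?thesis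
      proof (cases "e = e'")
        case True
        then show ?thesis using d as as' k
          by (intro exI[of _ "Suc (q + 2 * k)"]) (simp add: family_label_late_fst opposite_mark)
      next
        case False
        then show ?thesis using d as as' k
          by (intro exI[of _ "Suc (Suc (q + 2 * k))"]) (cases s; simp add: family_label_late_snd opposite_mark)
      qed
    qed
  qed
qed

lemma card_fibre_le_1:
  assumes "inj_on f A"
  shows "card {x\<in>A. f x = y} \<le> 1"
proof -
  have "card {x\<in>A. f x = y} = card (f ` {x\<in>A. f x = y})"
    using assms by (intro card_image[symmetric]) (auto intro: inj_on_subset)
  also have "\<dots> \<le> card {y}" by (intro card_mono) auto
  finally show ?thesis by simp
qed

lemma family_label_fibre:
  assumes "odd n" and "q \<le> n" and "j < 1 + q + 2 * (n - q)"
  shows "card {d\<in>{..n} \<times> UNIV. family_label n q d j = l} \<le> 1 + of_bool (j \<in> {1..q})"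
proof -
  consider "j = 0" | r where "r < q" "j = Suc r"
    | k where "j = Suc (q + 2 * k)" "q + k < n" | k where "j = Suc (Suc (q + 2 * k))" "q + k < n"
  proof -
    consider "j = 0" | "1 \<le> j" "j \<le> q" | "q < j" by linarith
    then show thesis
    proof cases
      case 2 then show thesis using that(2)[of "j - 1"] by simp
    next
      case 3
      define k where "k = (j - q - 1) div 2"
      have "q + k < n" using 3 assms(3) by (simp add: k_def)
      have "j = Suc (q + 2 * k) \<or> j = Suc (Suc (q + 2 * k))"
        using 3 unfolding k_def by presburger
      then show thesis using that(3,4) \<open>q + k < n\<close> by blast
    qed (use that(1) in blast)
  qed
  then show ?thesis
  proof cases
    case 1
    have "inj_on (\<lambda>d. family_label n q d j) ({..n} \<times> UNIV)"
      using 1 by (auto simp: inj_on_def family_label_0)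
    then have "card {d\<in>{..n} \<times> UNIV. family_label n q d j = l} \<le> 1"
      unfolding 1 by (rule card_fibre_le_1)
    with 1 show ?thesis by simp
  next
    case (2 r)
    have "r < n" using 2 assms(2) by simp
    let ?I = "{i\<in>{..n}. mark False (edge_label n r i) = l}"
    have "card {d\<in>{..n} \<times> UNIV. family_label n q d j = l} \<le> card (?I \<times> (UNIV :: bool set))"
      using 2 by (intro card_mono) (auto simp: family_label_early)
    also have "\<dots> = card ?I * 2"
      by (simp add: card_cartesian_product)
    finally have "card {d\<in>{..n} \<times> UNIV. family_label n q d j = l} \<le> card ?I * 2" .
    moreover have "card ?I \<le> 1"
      using inj_on_edge_label[OF assms(1) \<open>r < n\<close>] by (intro card_fibre_le_1) (simp add: inj_on_def)
    ultimately show ?thesis using 2 by simp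
  next
    case (3 k)
    have "inj_on (\<lambda>d. family_label n q d j) ({..n} \<times> UNIV)"
      using 3 inj_on_edge_label[OF assms(1) \<open>q + k < n\<close>] by (auto simp: inj_on_def family_label_late_fst)
    then have "card {d\<in>{..n} \<times> UNIV. family_label n q d j = l} \<le> 1"
      by (rule card_fibre_le_1)
    with 3 show ?thesis by simp
  next
    case (4 k)
    have "inj_on (\<lambda>d. family_label n q d j) ({..n} \<times> UNIV)"
      using 4 inj_on_edge_label[OF assms(1) \<open>q + k < n\<close>] by (auto simp: inj_on_def family_label_late_snd)
    then have "card {d\<in>{..n} \<times> UNIV. family_label n q d j = l} \<le> 1"
      by (rule card_fibre_le_1)
    with 4 show ?thesis by simp
  qed
qed

lemma sum_lessThan_of_bool_interval:
  assumes "q < p"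
  shows "(\<Sum>j<p. 1 + of_bool (j \<in> {1..q})) = p + (q :: nat)"
proof -
  have "{..<p} \<inter> {j. 1 \<le> j \<and> j \<le> q} = {1..q}"
    using assms by auto
  then have "(\<Sum>j<p. of_bool (j \<in> {1..q}) :: nat) = q"
    by simp
  then show ?thesis
    by (simp only: sum.distrib) simp
qed

lemma has_label_UPB_round_robin:
  assumes "odd n" and "q \<le> n"
  shows "has_label_UPB (1 + q + 2 * (n - q)) (2 * (n + 1))"
proof -
  let ?p = "1 + q + 2 * (n - q)" and ?D = "{..n} \<times> (UNIV :: bool set)"
  let ?V = "(\<lambda>d. map (family_label n q d) [0..<?p]) ` ?D"
  have orth: "pairwise (\<lambda>d d'. \<exists>j<?p. family_label n q d j = opposite (family_label n q d' j)) ?D"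
    by (intro pairwiseI family_label_orthogonal[OF assms])
  have fibres: "\<forall>j<?p. \<forall>l. card {d\<in>?D. family_label n q d j = l} \<le> 1 + of_bool (j \<in> {1..q})"
    using family_label_fibre[OF assms] by blast
  have card_D: "card ?D = 2 * (n + 1)"
    by (simp add: card_cartesian_product)
  have "(\<Sum>j<?p. 1 + of_bool (j \<in> {1..q})) = ?p + q"
    by (rule sum_lessThan_of_bool_interval) simp
  then have few: "(\<Sum>j<?p. 1 + of_bool (j \<in> {1..q})) < card ?D"
    using assms(2) card_D by simp
  have "label_UPB ?p ?V" "card ?V = 2 * (n + 1)"
    using label_UPB_tabulate[OF _ orth fibres few] card_D by simp_all
  then show ?thesis
    unfolding has_label_UPB_def by (intro exI[of _ ?V]) simp
qed

lemma has_label_UPB_le_double: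
  assumes "4 dvd s" and "p < s" and "s \<le> 2 * p"
  shows "has_label_UPB p s"
proof -
  obtain k where "s = 4 * k" using assms(1) by blast
  define n where "n = 2 * k - 1"
  define q where "q = 4 * k - 1 - p"
  have "odd n" "q \<le> n" "1 + q + 2 * (n - q) = p" "2 * (n + 1) = s"
    using assms \<open>s = 4 * k\<close> by (auto simp: n_def q_def)
  then show ?thesis using has_label_UPB_round_robin by metis
qed

definition admissible_size :: "nat \<Rightarrow> nat \<Rightarrow> bool" where
  "admissible_size p s \<longleftrightarrow> 4 dvd s \<and> p < s \<and> s \<le> 2 ^ p \<and> \<not> (p mod 4 = 1 \<and> s = 2 * p + 2)"

lemma double_add_10_le_two_power: "5 \<le> p \<Longrightarrow> 2 * p + 10 \<le> (2::nat) ^ p"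
  by (induction p rule: dec_induct) simp_all

lemma admissible_size_split:
  assumes adm: "admissible_size (Suc p) s" and large: "2 * Suc p < s" and not_5_20: "(p, s) \<noteq> (5, 20)"
  obtains a b where "a + b = s" "admissible_size p a" "admissible_size p b"
proof -
  obtain k where s: "s = 4 * k" using adm by (auto simp: admissible_size_def)
  have "2 \<le> p"
  proof (rule ccontr)
    assume "\<not> 2 \<le> p"
    then have "p = 0 \<or> p = 1" by auto
    then show False using adm large by (auto simp: admissible_size_def)
  qed
  then obtain d where "p = d + 2" by (metis le_add_diff_inverse2)
  then obtain m where m: "2 ^ p = 4 * (m::nat)" by (simp add: power_add)
  have s_le: "s \<le> 8 * m" using adm m by (simp add: admissible_size_def)
  show thesis
  proof (cases "p mod 4 = 1 \<and> s \<in> {4 * p, 4 * p + 4, 4 * p + 8}")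
    case True
    \<comment> \<open>the balanced splitting would use the excluded size 2p + 2, so move away from it\<close>
    then obtain u where u: "p = 4 * u + 1" by (metis add.commute div_mult_mod_eq mult.commute)
    then have "5 \<le> p" using \<open>2 \<le> p\<close> by auto
    have "9 \<le> p" if "s = 4 * p" using u that not_5_20 \<open>5 \<le> p\<close> by auto
    define a where "a = (if s = 4 * p then 2 * p - 6 else 2 * p - 2)"
    have "admissible_size p a" "admissible_size p (s - a)"
      using True double_add_10_le_two_power[OF \<open>5 \<le> p\<close>] \<open>s = 4 * p \<Longrightarrow> 9 \<le> p\<close> \<open>5 \<le> p\<close>
      unfolding a_def admissible_size_def by (auto; presburger)+
    moreover have "a + (s - a) = s" using True by (auto simp: a_def)
    ultimately show thesis by (rule that[rotated])
  next
    case False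
    show thesis
    proof (cases "even k")
      case True
      then obtain v where "k = 2 * v" by blast
      then show thesis using False s s_le adm large
        by (intro that[of "4 * v" "4 * v"]) (auto simp: admissible_size_def m)
    next
      case odd: False
      then obtain v where v: "k = 2 * v + 1" by (blast elim: oddE)
      have "p \<noteq> 4 * v" \<comment> \<open>else s = 2 (Suc p) + 2 is the size excluded for Suc p\<close>
        using adm s v by (auto simp: admissible_size_def)
      then have "p < 4 * v" using large s v by simp
      moreover have "v < m" using s_le s v by simp
      ultimately show thesis using False s v
        by (intro that[of "4 * v" "4 * v + 4"]) (auto simp: admissible_size_def m)
    qed
  qed
qed

lemma has_label_UPB_if_admissible_size:
  "admissible_size p s \<Longrightarrow> has_label_UPB p s"
proof (induction p arbitrary: s rule: less_induct)
  case (less p)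
  consider "s \<le> 2 * p" | "p = 6" "s = 20" | "2 * p < s" "(p, s) \<noteq> (6, 20)" by fastforce
  then show ?case
  proof cases
    case 1
    then show ?thesis using less.prems has_label_UPB_le_double by (auto simp: admissible_size_def)
  next
    case 2
    \<comment> \<open>20 has no admissible splitting on 5 qubits, where 12 is excluded; use 20 = 8 + 4 + 4 + 4.\<close>
    have "has_label_UPB 3 4" "has_label_UPB 3 8"
      using 2 by (auto intro: less.IH simp: admissible_size_def)
    then have "has_label_UPB (3 + 3) (\<Sum>i<4. [8, 4, 4, 4] ! i)"
      by (intro has_label_UPB_sum) (auto simp: less_Suc_eq numeral_eq_Suc)
    with 2 show ?thesis by (simp add: numeral_eq_Suc)
  next
    case 3
    have "p \<noteq> 0"
    proof
      assume "p = 0"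
      with 3 less.prems have "s = 1" by (simp add: admissible_size_def)
      with less.prems show False by (simp add: admissible_size_def)
    qed
    then obtain p' where "p = Suc p'" using not0_implies_Suc by blast
    with 3 less.prems obtain a b where "a + b = s" "admissible_size p' a" "admissible_size p' b"
      by (auto elim: admissible_size_split)
    with \<open>p = Suc p'\<close> less.IH show ?thesis
      by (metis has_label_UPB_Suc_add lessI)
  qed
qed

theorem theorem2:
  fixes p s :: nat
  assumes "p + 1 \<le> s" and "s \<le> 2 ^ p" and "4 dvd s"
    and "\<not> (p mod 4 = 1 \<and> s = 2 * p + 2)"
  shows "\<exists>S. is_UPB p S \<and> card S = s"
proof -
  have "admissible_size p s" using assms by (simp add: admissible_size_def)
  then have "has_label_UPB p s" by (rule has_label_UPB_if_admissible_size)
  then obtain V :: "(nat \<times> bool) label list set" where "label_UPB p V" "card V = s"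
    unfolding has_label_UPB_def by blast
  then show ?thesis using is_UPB_label_state by metis
qed

end
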